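(* For every intersection lattice $L$, there exists a tight intersection lattice $L'$ that is isomorphic (as a poset) to $L$.
   Context: A finite family $\mathcal{F}$ of sets is non-trivial if it is non-empty and no $X\in\mathcal{F}$ satisfies $X=\bigcup\mathcal{F}$. For such $\mathcal{F}$ and non-empty $\mathcal{T}\subseteq\mathcal{F}$, let $S_{\mathcal{T}}=\bigcap\mathcal{T}$, and let $S_\emptyset=\bigcup\mathcal{F}$. The intersection lattice of $\mathcal{F}$ is the poset $\mathbb{L}_{\mathcal{F}}=(\{S_{\mathcal{T}}\mid \mathcal{T}\subseteq\mathcal{F}\},\subseteq)$; its greatest element is $\hat 1=\bigcup\mathcal{F}$. A lattice is an intersection lattice if it equals $\mathbb{L}_{\mathcal{F}}$ for some non-trivial finite family $\mathcal{F}$. For $L=\mathbb{L}_{\mathcal{F}}$ and $x\in\hat 1$, let $\min_L(x)=S_{\{X\in\mathcal{F}\mid x\in X\}}$. The intersection lattice $L$ is tight if for every $U\in L$ with $U\neq\hat 1$ there is exactly one $x\in\hat 1$ with $\min_L(x)=U$. *)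

theory Defs
  imports Main
begin

definition nontrivial_family :: "'a set set \<Rightarrow> bool" where
  "nontrivial_family F \<longleftrightarrow> finite F \<and> F \<noteq> {} \<and> (\<forall>X\<in>F. X \<noteq> \<Union>F)"

definition S_of :: "'a set set \<Rightarrow> 'a set set \<Rightarrow> 'a set" where
  "S_of F T = (if T = {} then \<Union>F else \<Inter>T)"

(* carrier of the intersection lattice L_F; the order is set inclusion *)
definition int_lattice :: "'a set set \<Rightarrow> 'a set set" where
  "int_lattice F = {S_of F T | T. T \<subseteq> F}"

definition is_intersection_lattice :: "'a set set \<Rightarrow> bool" where
  "is_intersection_lattice L \<longleftrightarrow> (\<exists>F. nontrivial_family F \<and> L = int_lattice F)"

definition min_L :: "'a set set \<Rightarrow> 'a \<Rightarrow> 'a set" where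
  "min_L F x = S_of F {X \<in> F. x \<in> X}"

definition tight_family :: "'a set set \<Rightarrow> bool" where
  "tight_family F \<longleftrightarrow>
     (\<forall>U\<in>int_lattice F. U \<noteq> \<Union>F \<longrightarrow> (\<exists>!x. x \<in> \<Union>F \<and> min_L F x = U))"

definition is_tight_intersection_lattice :: "'a set set \<Rightarrow> bool" where
  "is_tight_intersection_lattice L \<longleftrightarrow>
     (\<exists>F. nontrivial_family F \<and> L = int_lattice F \<and> tight_family F)"

definition poset_iso :: "'a set set \<Rightarrow> 'b set set \<Rightarrow> bool" where
  "poset_iso L L' \<longleftrightarrow> (\<exists>f. bij_betw f L L' \<and> (\<forall>U\<in>L. \<forall>V\<in>L. U \<subseteq> V \<longleftrightarrow> f U \<subseteq> f V))"

end

theory Submission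
  imports Defs
begin

(* Represent each element U of the lattice by the set of its proper elements (all except the top)
   lying below U, and take the representations of the generators as the new family. This map is an
   order embedding preserving the top and nonempty intersections, so it reproduces the lattice. The
   points of the new family are the proper elements V, and min(V) represents the intersection of
   the generators containing V, which is V itself; so each proper element is min of exactly one
   point. Since the lattice is finite, the points can finally be relabelled by natural numbers. *)

lemma int_lattice_eq_image_Pow: "int_lattice F = S_of F ` Pow F"
  by (auto simp: int_lattice_def)

lemma finite_int_lattice: "finite F \<Longrightarrow> finite (int_lattice F)"
  by (simp add: int_lattice_eq_image_Pow)

lemma family_subset_int_lattice: "F \<subseteq> int_lattice F"
proof
  fix X assume "X \<in> F"
  then have "{X} \<subseteq> F" "X = S_of F {X}" by (simp_all add: S_of_def)
  then show "X \<in> int_lattice F" unfolding int_lattice_def by blast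
qed

lemma Union_in_int_lattice: "\<Union>F \<in> int_lattice F"
  unfolding int_lattice_def by (auto simp: S_of_def intro!: exI[of _ "{}"])

lemma int_lattice_subset_Union: "U \<in> int_lattice F \<Longrightarrow> U \<subseteq> \<Union>F"
  by (auto simp: int_lattice_def S_of_def split: if_splits)

lemma min_L_in_int_lattice: "min_L F x \<in> int_lattice F"
  unfolding min_L_def int_lattice_def by blast

lemma int_lattice_proper_eq_Inter:
  assumes "U \<in> int_lattice F" and "U \<noteq> \<Union>F"
  shows "{X \<in> F. U \<subseteq> X} \<noteq> {}" and "U = \<Inter>{X \<in> F. U \<subseteq> X}"
proof -
  obtain T where T: "T \<subseteq> F" "T \<noteq> {}" "U = \<Inter>T"
    using assms by (auto simp: int_lattice_def S_of_def split: if_splits)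
  then have "T \<subseteq> {X \<in> F. U \<subseteq> X}" by auto
  with T show "{X \<in> F. U \<subseteq> X} \<noteq> {}" and "U = \<Inter>{X \<in> F. U \<subseteq> X}" by auto
qed

lemma S_of_image:
  assumes "\<And>T. T \<subseteq> F \<Longrightarrow> T \<noteq> {} \<Longrightarrow> \<phi> (\<Inter>T) = \<Inter>(\<phi> ` T)"
    and "\<phi> (\<Union>F) = \<Union>(\<phi> ` F)" and "T \<subseteq> F"
  shows "S_of (\<phi> ` F) (\<phi> ` T) = \<phi> (S_of F T)"
  using assms by (auto simp: S_of_def)

lemma int_lattice_image:
  assumes "\<And>T. T \<subseteq> F \<Longrightarrow> T \<noteq> {} \<Longrightarrow> \<phi> (\<Inter>T) = \<Inter>(\<phi> ` T)"
    and "\<phi> (\<Union>F) = \<Union>(\<phi> ` F)"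
  shows "int_lattice (\<phi> ` F) = \<phi> ` int_lattice F"
proof -
  have "S_of (\<phi> ` F) ` Pow (\<phi> ` F) = (\<lambda>T. S_of (\<phi> ` F) (\<phi> ` T)) ` Pow F"
    by (auto simp: subset_image_iff image_iff)
  also have "\<dots> = \<phi> ` S_of F ` Pow F"
    using S_of_image[OF assms] by (auto simp: image_iff)
  finally show ?thesis by (simp add: int_lattice_eq_image_Pow image_image)
qed

lemma poset_iso_image:
  assumes "\<And>U V. U \<in> L \<Longrightarrow> V \<in> L \<Longrightarrow> \<phi> U \<subseteq> \<phi> V \<longleftrightarrow> U \<subseteq> V"
  shows "poset_iso L (\<phi> ` L)"
proof -
  have "inj_on \<phi> L"
    by (rule inj_onI) (metis assms subset_antisym order_refl)
  then show ?thesis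
    unfolding poset_iso_def bij_betw_def using assms by blast
qed

lemma poset_iso_trans:
  assumes "poset_iso L\<^sub>1 L\<^sub>2" and "poset_iso L\<^sub>2 L\<^sub>3"
  shows "poset_iso L\<^sub>1 L\<^sub>3"
proof -
  obtain f g where f: "bij_betw f L\<^sub>1 L\<^sub>2" "\<forall>U\<in>L\<^sub>1. \<forall>V\<in>L\<^sub>1. U \<subseteq> V \<longleftrightarrow> f U \<subseteq> f V"
    and g: "bij_betw g L\<^sub>2 L\<^sub>3" "\<forall>U\<in>L\<^sub>2. \<forall>V\<in>L\<^sub>2. U \<subseteq> V \<longleftrightarrow> g U \<subseteq> g V"
    using assms unfolding poset_iso_def by blast
  have "bij_betw (g \<circ> f) L\<^sub>1 L\<^sub>3"
    using f(1) g(1) by (rule bij_betw_trans)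
  moreover have "\<forall>U\<in>L\<^sub>1. \<forall>V\<in>L\<^sub>1. U \<subseteq> V \<longleftrightarrow> (g \<circ> f) U \<subseteq> (g \<circ> f) V"
    using f g bij_betw_apply[OF f(1)] by simp
  ultimately show ?thesis unfolding poset_iso_def by blast
qed

lemma nontrivial_family_image:
  assumes "nontrivial_family F"
    and "\<And>U V. U \<in> int_lattice F \<Longrightarrow> V \<in> int_lattice F \<Longrightarrow> \<phi> U \<subseteq> \<phi> V \<longleftrightarrow> U \<subseteq> V"
    and "\<phi> (\<Union>F) = \<Union>(\<phi> ` F)"
  shows "nontrivial_family (\<phi> ` F)"
  unfolding nontrivial_family_def
proof (intro conjI ballI)
  show "finite (\<phi> ` F)" and "\<phi> ` F \<noteq> {}"
    using assms(1) by (auto simp: nontrivial_family_def)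
  fix Y assume "Y \<in> \<phi> ` F"
  then obtain X where X: "X \<in> F" "Y = \<phi> X" by blast
  have "X \<noteq> \<Union>F"
    using assms(1) X(1) by (auto simp: nontrivial_family_def)
  then have "\<phi> X \<noteq> \<phi> (\<Union>F)"
    using assms(2) X(1) family_subset_int_lattice Union_in_int_lattice
    by (metis subset_antisym order_refl subsetD)
  with X(2) assms(3) show "Y \<noteq> \<Union>(\<phi> ` F)" by simp
qed

definition proper_below :: "'a set set \<Rightarrow> 'a set \<Rightarrow> 'a set set" where
  "proper_below F U = {V \<in> int_lattice F - {\<Union>F}. V \<subseteq> U}"

lemma proper_below_subset_iff:
  assumes "nontrivial_family F" and "U \<in> int_lattice F" and "W \<in> int_lattice F"
  shows "proper_below F U \<subseteq> proper_below F W \<longleftrightarrow> U \<subseteq> W"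
proof
  assume below: "proper_below F U \<subseteq> proper_below F W"
  show "U \<subseteq> W"
  proof (cases "U = \<Union>F")
    case True
    have "X \<in> proper_below F U" if "X \<in> F" for X
      using that True assms(1) family_subset_int_lattice
      by (auto simp: proper_below_def nontrivial_family_def)
    with below True show ?thesis by (auto simp: proper_below_def)
  next
    case False
    then have "U \<in> proper_below F U" using assms(2) by (simp add: proper_below_def)
    with below show ?thesis by (auto simp: proper_below_def)
  qed
qed (auto simp: proper_below_def)

lemma proper_below_Inter: "T \<noteq> {} \<Longrightarrow> proper_below F (\<Inter>T) = \<Inter>(proper_below F ` T)"
  by (auto simp: proper_below_def)

lemma proper_below_Union: "proper_below F (\<Union>F) = int_lattice F - {\<Union>F}"
  by (auto simp: proper_below_def dest: int_lattice_subset_Union)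

lemma Union_proper_below:
  assumes "nontrivial_family F"
  shows "\<Union>(proper_below F ` F) = proper_below F (\<Union>F)"
proof
  show "proper_below F (\<Union>F) \<subseteq> \<Union>(proper_below F ` F)"
  proof
    fix V assume V: "V \<in> proper_below F (\<Union>F)"
    then have "{X \<in> F. V \<subseteq> X} \<noteq> {}"
      by (intro int_lattice_proper_eq_Inter(1)) (simp_all add: proper_below_def)
    then obtain X where "X \<in> F" "V \<subseteq> X" by blast
    with V show "V \<in> \<Union>(proper_below F ` F)" by (auto simp: proper_below_def)
  qed
qed (auto simp: proper_below_def)

lemma int_lattice_proper_below_family:
  assumes "nontrivial_family F"
  shows "int_lattice (proper_below F ` F) = proper_below F ` int_lattice F"
  by (rule int_lattice_image) (simp_all add: proper_below_Inter Union_proper_below[OF assms])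

lemma min_L_proper_below_family:
  assumes "nontrivial_family F" and V: "V \<in> int_lattice F - {\<Union>F}"
  shows "min_L (proper_below F ` F) V = proper_below F V"
proof -
  define T where "T = {X \<in> F. V \<subseteq> X}"
  have "{Y \<in> proper_below F ` F. V \<in> Y} = proper_below F ` T"
    using V by (auto simp: T_def proper_below_def)
  moreover have "S_of (proper_below F ` F) (proper_below F ` T) = proper_below F (S_of F T)"
    by (rule S_of_image) (simp_all add: proper_below_Inter Union_proper_below[OF assms(1)] T_def)
  moreover have "S_of F T = V"
  proof -
    have "T \<noteq> {}" "V = \<Inter>T"
      using int_lattice_proper_eq_Inter[of V F] V unfolding T_def by auto
    then show ?thesis by (simp add: S_of_def)
  qed
  ultimately show ?thesis by (simp add: min_L_def)
qed

lemma tight_family_proper_below_family: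
  assumes "nontrivial_family F"
  shows "tight_family (proper_below F ` F)"
  unfolding tight_family_def
proof (intro ballI impI)
  let ?G = "proper_below F ` F"
  have points: "\<Union>?G = int_lattice F - {\<Union>F}"
    unfolding Union_proper_below[OF assms] proper_below_Union ..
  fix U' assume "U' \<in> int_lattice ?G" and "U' \<noteq> \<Union>?G"
  then obtain U where U: "U \<in> int_lattice F" "U \<noteq> \<Union>F" "U' = proper_below F U"
    unfolding int_lattice_proper_below_family[OF assms] Union_proper_below[OF assms] by blast
  show "\<exists>!x. x \<in> \<Union>?G \<and> min_L ?G x = U'"
  proof (rule ex1I[of _ U])
    show "U \<in> \<Union>?G \<and> min_L ?G U = U'"
      using U points min_L_proper_below_family[OF assms] by simp
  next
    fix x assume x: "x \<in> \<Union>?G \<and> min_L ?G x = U'"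
    then have "x \<in> int_lattice F" and "proper_below F x = proper_below F U"
      using U points min_L_proper_below_family[OF assms, of x] by simp_all
    then show "x = U"
      using proper_below_subset_iff[OF assms] U(1) by (metis subset_antisym order_refl)
  qed
qed

lemma nontrivial_family_proper_below_family:
  assumes "nontrivial_family F"
  shows "nontrivial_family (proper_below F ` F)"
  by (rule nontrivial_family_image[OF assms])
    (simp_all add: proper_below_subset_iff[OF assms] Union_proper_below[OF assms])

lemma poset_iso_proper_below_family:
  assumes "nontrivial_family F"
  shows "poset_iso (int_lattice F) (int_lattice (proper_below F ` F))"
  unfolding int_lattice_proper_below_family[OF assms]
  by (rule poset_iso_image) (simp add: proper_below_subset_iff[OF assms])

lemma inj_on_image_subset_iff:
  assumes "inj_on f C" and "A \<subseteq> C" and "B \<subseteq> C"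
  shows "f ` A \<subseteq> f ` B \<longleftrightarrow> A \<subseteq> B"
  using inj_on_image_mem_iff[OF assms(1) _ assms(3)] assms(2) by blast

lemma image_Inter_relabel:
  assumes "inj_on f (\<Union>F)" and "T \<subseteq> F" and "T \<noteq> {}"
  shows "f ` \<Inter>T = \<Inter>((`) f ` T)"
  using image_INT[of f "\<Union>F" T "\<lambda>X. X"] assms by auto

lemma int_lattice_relabel:
  assumes "inj_on f (\<Union>F)"
  shows "int_lattice ((`) f ` F) = (`) f ` int_lattice F"
  by (rule int_lattice_image) (simp_all add: image_Inter_relabel[OF assms] image_Union)

lemma nontrivial_family_relabel:
  assumes "nontrivial_family F" and "inj_on f (\<Union>F)"
  shows "nontrivial_family ((`) f ` F)"
  by (rule nontrivial_family_image[OF assms(1)])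
    (auto simp: inj_on_image_subset_iff[OF assms(2)] int_lattice_subset_Union)

lemma poset_iso_relabel:
  assumes "inj_on f (\<Union>F)"
  shows "poset_iso (int_lattice F) (int_lattice ((`) f ` F))"
  unfolding int_lattice_relabel[OF assms]
  by (rule poset_iso_image) (simp add: inj_on_image_subset_iff[OF assms] int_lattice_subset_Union)

lemma min_L_relabel:
  assumes "inj_on f (\<Union>F)" and "x \<in> \<Union>F"
  shows "min_L ((`) f ` F) (f x) = f ` min_L F x"
proof -
  have "f x \<in> f ` X \<longleftrightarrow> x \<in> X" if "X \<in> F" for X
    using inj_on_image_mem_iff[OF assms] that by blast
  then have "{Y \<in> (`) f ` F. f x \<in> Y} = (`) f ` {X \<in> F. x \<in> X}"
    by auto
  moreover have "S_of ((`) f ` F) ((`) f ` {X \<in> F. x \<in> X}) = f ` S_of F {X \<in> F. x \<in> X}"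
    by (rule S_of_image) (simp_all add: image_Inter_relabel[OF assms(1)] image_Union)
  ultimately show ?thesis
    unfolding min_L_def by simp
qed

lemma tight_family_relabel:
  assumes "tight_family F" and inj: "inj_on f (\<Union>F)"
  shows "tight_family ((`) f ` F)"
  unfolding tight_family_def
proof (intro ballI impI)
  let ?G = "(`) f ` F"
  have image_eq_iff: "f ` U = f ` V \<longleftrightarrow> U = V" if "U \<in> int_lattice F" "V \<in> int_lattice F" for U V
    using inj_on_image_eq_iff[OF inj int_lattice_subset_Union int_lattice_subset_Union] that .
  fix U' assume "U' \<in> int_lattice ?G" and U'_proper: "U' \<noteq> \<Union>?G"
  then obtain U where U: "U \<in> int_lattice F" "U' = f ` U"
    unfolding int_lattice_relabel[OF inj] by blast
  have "U \<noteq> \<Union>F"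
    using U(2) U'_proper image_Union[of f F] by metis
  then have unique: "\<exists>!x. x \<in> \<Union>F \<and> min_L F x = U"
    using assms(1) U(1) unfolding tight_family_def by simp
  then obtain x where x: "x \<in> \<Union>F" "min_L F x = U" by blast
  show "\<exists>!z. z \<in> \<Union>?G \<and> min_L ?G z = U'"
  proof (rule ex1I[of _ "f x"])
    show "f x \<in> \<Union>?G \<and> min_L ?G (f x) = U'"
      using x U min_L_relabel[OF inj] by auto
  next
    fix z assume z: "z \<in> \<Union>?G \<and> min_L ?G z = U'"
    then obtain y where y: "y \<in> \<Union>F" "z = f y" by auto
    then have "f ` min_L F y = f ` U"
      using z U min_L_relabel[OF inj] by simp
    then have "min_L F y = U"
      using image_eq_iff[OF min_L_in_int_lattice U(1)] by blast
    then show "z = f x"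
      using unique x y by blast
  qed
qed

theorem lemma4p3:
  fixes L :: "'a set set"
  assumes "is_intersection_lattice L"
  shows "\<exists>L' :: nat set set. is_tight_intersection_lattice L' \<and> poset_iso L L'"
proof -
  obtain F where F: "nontrivial_family F" and L: "L = int_lattice F"
    using assms by (auto simp: is_intersection_lattice_def)
  let ?G = "proper_below F ` F"
  have "\<Union>?G \<subseteq> int_lattice F"
    unfolding Union_proper_below[OF F] proper_below_Union by blast
  moreover have "finite (int_lattice F)"
    using F by (simp add: nontrivial_family_def finite_int_lattice)
  ultimately have "finite (\<Union>?G)"
    by (rule finite_subset)
  then obtain f :: "'a set \<Rightarrow> nat" where f: "inj_on f (\<Union>?G)"
    by (metis finite_imp_inj_to_nat_seg)
  define H where "H = (`) f ` ?G"
  have "nontrivial_family H"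
    unfolding H_def using nontrivial_family_proper_below_family[OF F] f by (rule nontrivial_family_relabel)
  moreover have "tight_family H"
    unfolding H_def using tight_family_proper_below_family[OF F] f by (rule tight_family_relabel)
  ultimately have "is_tight_intersection_lattice (int_lattice H)"
    unfolding is_tight_intersection_lattice_def by blast
  moreover have "poset_iso L (int_lattice H)"
    unfolding L H_def using poset_iso_proper_below_family[OF F] poset_iso_relabel[OF f] by (rule poset_iso_trans)
  ultimately show ?thesis by blast
qed

end
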